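(* Let $G$ be an abelian group, $n\ge 4$ an even integer, and $P_0,P_1,\dots,P_{n-1}$ distinct elements of $G$ forming an alternating cycle in the sum cograph, i.e. there are $a,b\in G$ with $P_i+P_{i+1}=a$ for all even $i$ and $P_i+P_{i+1}=b$ for all odd $i$ (indices modulo $n$). Then $G$ contains a nonzero element $x$ with $(n/2)x=0$.
   Context: A sum cograph over an abelian group $G$ has as points distinct elements of $G$, and the edge between distinct points $X,Y$ is $X+Y$. *)

theory Defs
  imports Main
begin

end

theory Submission
  imports Defs
begin

text \<open>Two consecutive steps of an alternating walk translate by b - a, so P (2k) = P 0 + k (b - a).
  Going once around the cycle returns to P 0, giving (n/2)(b - a) = 0, while b - a \<noteq> 0
  because P 2 \<noteq> P 0.\<close>

lemma alternating_walk_even_index: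
  fixes Q :: "nat \<Rightarrow> 'a::ab_group_add"
  assumes even_step: "\<And>i. i < N \<Longrightarrow> even i \<Longrightarrow> Q i + Q (i + 1) = a"
    and odd_step: "\<And>i. i < N \<Longrightarrow> odd i \<Longrightarrow> Q i + Q (i + 1) = b"
    and "2 * k \<le> N"
  shows "Q (2 * k) = Q 0 + (\<Sum>j<k. b - a)"
  using \<open>2 * k \<le> N\<close>
proof (induction k)
  case 0
  then show ?case by simp
next
  case (Suc k)
  have even_sum: "Q (2 * k) + Q (2 * k + 1) = a" using even_step Suc.prems by simp
  have odd_sum: "Q (2 * k + 1) + Q (2 * k + 2) = b" using odd_step[of "2 * k + 1"] Suc.prems by simp
  have "Q (2 * k + 2) = b - Q (2 * k + 1)" using odd_sum by (metis add_diff_cancel_left')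
  also have "\<dots> = b - (a - Q (2 * k))" using even_sum by (metis add_diff_cancel_left')
  finally have "Q (2 * Suc k) = Q (2 * k) + (b - a)" by (simp add: algebra_simps)
  with Suc show ?case by (simp add: algebra_simps)
qed

theorem corollary2p1p5:
  fixes P :: "nat \<Rightarrow> 'a::ab_group_add" and n :: nat and a b :: 'a
  assumes "n \<ge> 4" and "even n"
    and "inj_on P {..<n}"
    and "\<forall>i<n. even i \<longrightarrow> P i + P ((i + 1) mod n) = a"
    and "\<forall>i<n. odd i \<longrightarrow> P i + P ((i + 1) mod n) = b"
  shows "\<exists>x::'a. x \<noteq> 0 \<and> (\<Sum>j<n div 2. x) = 0"
proof -
  define Q where "Q i = P (i mod n)" for i
    \<comment> \<open>periodic extension: the closing edge from P (n - 1) to P 0 becomes an ordinary step\<close>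
  have Q_index: "Q (2 * k) = Q 0 + (\<Sum>j<k. b - a)" if "2 * k \<le> n" for k
    using alternating_walk_even_index[of n Q a b k] assms(4,5) that by (simp add: Q_def)
  have "(\<Sum>j<n div 2. b - a) = 0"
    using Q_index[of "n div 2"] \<open>even n\<close> by (simp add: Q_def)
  moreover have "b - a \<noteq> 0"
  proof
    assume "b - a = 0"
    then have "P 2 = P 0" using Q_index[of 1] \<open>n \<ge> 4\<close> by (simp add: Q_def)
    with assms(1,3) show False by (auto dest: inj_onD)
  qed
  ultimately show ?thesis by blast
qed

end
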